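(* Let $k \ge 2$ be an integer. There is a constant $C_k>0$ depending only on $k$ such that for all real numbers $x \ge 1$ and all real $y$ with $1 \le y \le x$, \[ Q_k(x+y) - Q_k(x) \le C_k\, \frac{y}{\log(y+1)}. \]
   Context: A positive integer $n$ is $k$-full if every prime $p$ dividing $n$ satisfies $p^k \mid n$ (i.e. every exponent in its prime factorization is at least $k$); $2$-full numbers are called squarefull. $Q_k(x)$ denotes the number of $k$-full positive integers $n \le x$. *)

theory Defs
  imports "HOL-Analysis.Analysis" "HOL-Computational_Algebra.Primes"
begin

definition k_full :: "nat \<Rightarrow> nat \<Rightarrow> bool" where
  "k_full k n \<longleftrightarrow> n > 0 \<and> (\<forall>p. prime p \<and> p dvd n \<longrightarrow> p ^ k dvd n)"

definition Q :: "nat \<Rightarrow> real \<Rightarrow> nat" where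
  "Q k x = card {n::nat. n \<ge> 1 \<and> real n \<le> x \<and> k_full k n}"

end

(* A k-full number n (k >= 2) is never exactly divisible by a prime: p dvd n forces p^2 dvd n.
   So the k-full numbers in (x, x + y] survive the sieve that removes, for every prime p, the
   integers exactly divisible by p, a set of density g(p) = (p - 1)/p^2. Selberg's upper bound
   sieve with squarefree moduli d <= W bounds the survivors by y / G + O(W^8), where G is the sum
   over squarefree d <= W of the product of g(p)/(1 - g(p)) over p dvd d. As g(p)/(1 - g(p)) is
   1/p up to a factor 1 - O(1/p^2), writing each n <= W as d s^2 compares G with the harmonic
   sum and gives G >= log(W + 1)/12. The level W = y^(1/10) then yields O(y / log y). *)

theory Submission
  imports Defs "HOL-Number_Theory.Totient" "HOL-Computational_Algebra.Squarefree"
begin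

section \<open>Selberg's upper bound sieve\<close>

lemma sum_Pow_minus_one_power_card:
  assumes "finite A"
  shows "(\<Sum>X\<in>Pow A. (-1::real) ^ card (A - X)) = (if A = {} then 1 else 0)"
proof -
  have "(\<Prod>x\<in>A. (1::real) + (-1)) = (\<Sum>X\<in>Pow A. (\<Prod>x\<in>X. 1) * (\<Prod>x\<in>A - X. -1))"
    by (rule prod_add[OF assms])
  moreover have "(\<Prod>x\<in>A. (1::real) + (-1)) = (if A = {} then 1 else 0)"
    using assms by auto
  ultimately show ?thesis by simp
qed

lemma subset_moebius_inversion:
  fixes D :: "'a set set" and z :: "'a set \<Rightarrow> real"
  assumes finD: "finite D" and down: "\<And>V S. V \<in> D \<Longrightarrow> S \<subseteq> V \<Longrightarrow> S \<in> D"
    and fin: "\<And>V. V \<in> D \<Longrightarrow> finite V" and T: "T \<in> D"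
  shows "(\<Sum>S\<in>{S\<in>D. T \<subseteq> S}. \<Sum>V\<in>{V\<in>D. S \<subseteq> V}. (-1) ^ card (V - S) * z V) = z T"
proof -
  have inner: "(\<Sum>S\<in>{S\<in>D. T \<subseteq> S \<and> S \<subseteq> V}. (-1) ^ card (V - S) * z V) = (if V = T then z V else 0)"
    if V: "V \<in> D" for V
  proof (cases "T \<subseteq> V")
    case False
    then have empty: "{S\<in>D. T \<subseteq> S \<and> S \<subseteq> V} = {}" and "V \<noteq> T" by auto
    then show ?thesis unfolding empty by simp
  next
    case True
    have interval: "{S\<in>D. T \<subseteq> S \<and> S \<subseteq> V} = (\<lambda>X. T \<union> X) ` Pow (V - T)"
    proof (intro equalityI subsetI)
      fix S assume "S \<in> {S\<in>D. T \<subseteq> S \<and> S \<subseteq> V}"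
      then show "S \<in> (\<lambda>X. T \<union> X) ` Pow (V - T)" by (intro image_eqI[of _ _ "S - T"]) auto
    next
      fix S assume "S \<in> (\<lambda>X. T \<union> X) ` Pow (V - T)"
      then show "S \<in> {S\<in>D. T \<subseteq> S \<and> S \<subseteq> V}" using True by (auto intro: down[OF V])
    qed
    have "inj_on (\<lambda>X. T \<union> X) (Pow (V - T))"
      by (rule inj_onI) auto
    then have "(\<Sum>S\<in>{S\<in>D. T \<subseteq> S \<and> S \<subseteq> V}. (-1) ^ card (V - S) * z V)
        = (\<Sum>X\<in>Pow (V - T). (-1) ^ card ((V - T) - X)) * z V"
      unfolding interval by (simp add: sum.reindex sum_distrib_right Diff_Un Diff_Int_distrib2 set_diff_eq)
    also have "\<dots> = (if V = T then z V else 0)"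
      using True fin[OF V] by (simp add: sum_Pow_minus_one_power_card)
    finally show ?thesis .
  qed
  have "(\<Sum>S\<in>{S\<in>D. T \<subseteq> S}. \<Sum>V\<in>{V\<in>D. S \<subseteq> V}. (-1) ^ card (V - S) * z V)
      = (\<Sum>V\<in>D. \<Sum>S\<in>{S\<in>D. T \<subseteq> S \<and> S \<subseteq> V}. (-1) ^ card (V - S) * z V)"
    by (subst sum.swap_restrict) (use finD in \<open>auto intro!: sum.cong\<close>)
  also have "\<dots> = (\<Sum>V\<in>D. if V = T then z V else 0)"
    by (rule sum.cong) (simp_all add: inner)
  also have "\<dots> = z T"
    using T finD by (simp add: sum.delta')
  finally show ?thesis .
qed

lemma double_sum_common_subsets:
  fixes D :: "'a set set" and a F :: "'a set \<Rightarrow> real"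
  assumes finD: "finite D"
  shows "(\<Sum>S1\<in>D. \<Sum>S2\<in>D. a S1 * a S2 * (\<Sum>T\<in>{T\<in>D. T \<subseteq> S1 \<and> T \<subseteq> S2}. F T))
       = (\<Sum>T\<in>D. F T * (\<Sum>S\<in>{S\<in>D. T \<subseteq> S}. a S)\<^sup>2)"
proof -
  define c where "c T S1 S2 = (if T \<subseteq> S1 \<and> T \<subseteq> S2 then a S1 * a S2 * F T else 0)" for T S1 S2
  have "(\<Sum>S1\<in>D. \<Sum>S2\<in>D. a S1 * a S2 * (\<Sum>T\<in>{T\<in>D. T \<subseteq> S1 \<and> T \<subseteq> S2}. F T))
        = (\<Sum>S1\<in>D. \<Sum>S2\<in>D. \<Sum>T\<in>D. c T S1 S2)"
    by (simp add: sum.inter_filter[OF finD] sum_distrib_left c_def if_distrib cong: if_cong)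
  also have "\<dots> = (\<Sum>S1\<in>D. \<Sum>T\<in>D. \<Sum>S2\<in>D. c T S1 S2)"
    by (rule sum.cong[OF refl], rule sum.swap)
  also have "\<dots> = (\<Sum>T\<in>D. \<Sum>S1\<in>D. \<Sum>S2\<in>D. c T S1 S2)"
    by (rule sum.swap)
  also have "\<dots> = (\<Sum>T\<in>D. F T * (\<Sum>S\<in>{S\<in>D. T \<subseteq> S}. a S)\<^sup>2)"
  proof (rule sum.cong[OF refl])
    fix T
    have "(\<Sum>S\<in>{S\<in>D. T \<subseteq> S}. a S)\<^sup>2
        = (\<Sum>S1\<in>D. \<Sum>S2\<in>D. (if T \<subseteq> S1 then a S1 else 0) * (if T \<subseteq> S2 then a S2 else 0))"
      by (simp add: sum.inter_filter[OF finD] power2_eq_square sum_product)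
    then show "(\<Sum>S1\<in>D. \<Sum>S2\<in>D. c T S1 S2) = F T * (\<Sum>S\<in>{S\<in>D. T \<subseteq> S}. a S)\<^sup>2"
      by (simp add: sum_distrib_left c_def) (intro sum.cong refl; auto)
  qed
  finally show ?thesis .
qed

lemma prod_union_eq_sum_Pow_inter:
  fixes f :: "'a \<Rightarrow> real"
  assumes "finite A" "finite B" and nonzero: "\<And>p. p \<in> A \<inter> B \<Longrightarrow> f p \<noteq> 0"
  shows "(\<Prod>p\<in>A \<union> B. f p) = (\<Prod>p\<in>A. f p) * (\<Prod>p\<in>B. f p) * (\<Sum>T\<in>Pow (A \<inter> B). \<Prod>p\<in>T. 1 / f p - 1)"
proof -
  have "(\<Sum>T\<in>Pow (A \<inter> B). \<Prod>p\<in>T. 1 / f p - 1) = (\<Prod>p\<in>A \<inter> B. (1 / f p - 1) + 1)"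
    using prod_add[of "A \<inter> B" "\<lambda>p. 1 / f p - 1" "\<lambda>_. 1"] assms by simp
  also have "\<dots> = 1 / (\<Prod>p\<in>A \<inter> B. f p)"
    by (simp add: prod_dividef)
  finally have sum_Pow: "(\<Sum>T\<in>Pow (A \<inter> B). \<Prod>p\<in>T. 1 / f p - 1) = 1 / (\<Prod>p\<in>A \<inter> B. f p)" .
  have "(\<Prod>p\<in>A \<union> B. f p) * (\<Prod>p\<in>A \<inter> B. f p) = (\<Prod>p\<in>A. f p) * (\<Prod>p\<in>B. f p)"
    by (rule prod.union_inter) (use assms in auto)
  moreover have "(\<Prod>p\<in>A \<inter> B. f p) \<noteq> 0"
    using assms by (simp add: prod_zero_iff)
  ultimately show ?thesis
    unfolding sum_Pow by (simp add: field_simps)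
qed

lemma selberg_diagonalization:
  fixes D :: "'a set set" and gp :: "'a \<Rightarrow> real" and lam z :: "'a set \<Rightarrow> real"
  assumes finD: "finite D" and down: "\<And>V S. V \<in> D \<Longrightarrow> S \<subseteq> V \<Longrightarrow> S \<in> D"
    and fin: "\<And>V. V \<in> D \<Longrightarrow> finite V"
    and nonzero: "\<And>V p. V \<in> D \<Longrightarrow> p \<in> V \<Longrightarrow> gp p \<noteq> 0"
    and lam: "\<And>S. S \<in> D \<Longrightarrow>
      lam S * (\<Prod>p\<in>S. gp p) = (\<Sum>V\<in>{V\<in>D. S \<subseteq> V}. (-1) ^ card (V - S) * z V)"
  shows "(\<Sum>S1\<in>D. \<Sum>S2\<in>D. lam S1 * lam S2 * (\<Prod>p\<in>S1 \<union> S2. gp p))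
       = (\<Sum>T\<in>D. (\<Prod>p\<in>T. 1 / gp p - 1) * (z T)\<^sup>2)"
proof -
  define g where "g S = (\<Prod>p\<in>S. gp p)" for S
  define F where "F T = (\<Prod>p\<in>T. 1 / gp p - 1)" for T
  have g_union: "g (S1 \<union> S2) = g S1 * g S2 * (\<Sum>T\<in>{T\<in>D. T \<subseteq> S1 \<and> T \<subseteq> S2}. F T)"
    if "S1 \<in> D" "S2 \<in> D" for S1 S2
  proof -
    have "{T\<in>D. T \<subseteq> S1 \<and> T \<subseteq> S2} = Pow (S1 \<inter> S2)"
      using that by (auto intro: down)
    then show ?thesis
      unfolding g_def F_def using prod_union_eq_sum_Pow_inter[of S1 S2 gp] that fin nonzero by auto
  qed
  have "(\<Sum>S1\<in>D. \<Sum>S2\<in>D. lam S1 * lam S2 * g (S1 \<union> S2))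
      = (\<Sum>S1\<in>D. \<Sum>S2\<in>D. (lam S1 * g S1) * (lam S2 * g S2) * (\<Sum>T\<in>{T\<in>D. T \<subseteq> S1 \<and> T \<subseteq> S2}. F T))"
    by (intro sum.cong refl) (simp add: g_union mult_ac)
  also have "\<dots> = (\<Sum>T\<in>D. F T * (\<Sum>S\<in>{S\<in>D. T \<subseteq> S}. lam S * g S)\<^sup>2)"
    by (rule double_sum_common_subsets[OF finD])
  also have "\<dots> = (\<Sum>T\<in>D. F T * (z T)\<^sup>2)"
  proof (rule sum.cong[OF refl])
    fix T assume T: "T \<in> D"
    have "(\<Sum>S\<in>{S\<in>D. T \<subseteq> S}. lam S * g S)
        = (\<Sum>S\<in>{S\<in>D. T \<subseteq> S}. \<Sum>V\<in>{V\<in>D. S \<subseteq> V}. (-1) ^ card (V - S) * z V)"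
      unfolding g_def by (intro sum.cong refl lam) auto
    also have "\<dots> = z T"
      by (rule subset_moebius_inversion[OF finD down fin T])
    finally show "F T * (\<Sum>S\<in>{S\<in>D. T \<subseteq> S}. lam S * g S)\<^sup>2 = F T * (z T)\<^sup>2"
      by simp
  qed
  finally show ?thesis
    unfolding g_def F_def .
qed

lemma selberg_form_at_moebius_weights:
  fixes D :: "'a set set" and gp :: "'a \<Rightarrow> real" and lam H :: "'a set \<Rightarrow> real"
  assumes finD: "finite D" and down: "\<And>V S. V \<in> D \<Longrightarrow> S \<subseteq> V \<Longrightarrow> S \<in> D"
    and fin: "\<And>V. V \<in> D \<Longrightarrow> finite V"
    and gp: "\<And>V p. V \<in> D \<Longrightarrow> p \<in> V \<Longrightarrow> 0 < gp p \<and> gp p < 1"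
    and H_def: "\<And>T. H T = (\<Prod>p\<in>T. 1 / (1 / gp p - 1))" and G_def: "G = (\<Sum>T\<in>D. H T)"
    and lam: "\<And>S. S \<in> D \<Longrightarrow>
    lam S * (\<Prod>p\<in>S. gp p) = (\<Sum>V\<in>{V\<in>D. S \<subseteq> V}. (-1) ^ card (V - S) * ((-1) ^ card V * H V / G))"
  shows "(\<Sum>S1\<in>D. \<Sum>S2\<in>D. lam S1 * lam S2 * (\<Prod>p\<in>S1 \<union> S2. gp p)) = 1 / G"
proof -
  have inverse_H: "(\<Prod>p\<in>T. 1 / gp p - 1) * H T = 1" if "T \<in> D" for T
    unfolding H_def prod.distrib[symmetric]
  proof (intro prod.neutral ballI)
    fix p assume "p \<in> T"
    then have "0 < gp p" "gp p < 1"
      using gp[OF that] by auto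
    then have "1 / gp p - 1 \<noteq> 0"
      by (simp add: field_simps)
    then show "(1 / gp p - 1) * (1 / (1 / gp p - 1)) = 1"
      by simp
  qed
  have "(\<Sum>S1\<in>D. \<Sum>S2\<in>D. lam S1 * lam S2 * (\<Prod>p\<in>S1 \<union> S2. gp p))
      = (\<Sum>T\<in>D. (\<Prod>p\<in>T. 1 / gp p - 1) * ((-1) ^ card T * H T / G)\<^sup>2)"
    using gp by (intro selberg_diagonalization[OF finD down fin _ lam]) fastforce+
  also have "\<dots> = (\<Sum>T\<in>D. H T / G\<^sup>2)"
  proof (rule sum.cong[OF refl])
    fix T assume T: "T \<in> D"
    have "(\<Prod>p\<in>T. 1 / gp p - 1) * ((-1) ^ card T * H T / G)\<^sup>2
        = ((\<Prod>p\<in>T. 1 / gp p - 1) * H T) * H T / G\<^sup>2"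
      by (simp add: power_mult_distrib power_divide power2_eq_square flip: power_mult)
    then show "(\<Prod>p\<in>T. 1 / gp p - 1) * ((-1) ^ card T * H T / G)\<^sup>2 = H T / G\<^sup>2"
      using inverse_H[OF T] by simp
  qed
  also have "\<dots> = 1 / G"
    by (simp add: G_def sum_divide_distrib[symmetric] power2_eq_square)
  finally show ?thesis .
qed

text \<open>Selberg's optimal weights: after diagonalisation the quadratic form is minimised subject
  to \<open>lam {} = 1\<close> by the Moebius transform of \<open>T \<mapsto> (-1)\<^bsup>|T|\<^esup> H T / G\<close>.\<close>

lemma selberg_optimal_weights:
  fixes D :: "'a set set" and gp :: "'a \<Rightarrow> real"
  assumes finD: "finite D" and down: "\<And>V S. V \<in> D \<Longrightarrow> S \<subseteq> V \<Longrightarrow> S \<in> D"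
    and fin: "\<And>V. V \<in> D \<Longrightarrow> finite V" and empty: "{} \<in> D"
    and gp: "\<And>V p. V \<in> D \<Longrightarrow> p \<in> V \<Longrightarrow> 0 < gp p \<and> gp p < 1"
  shows "\<exists>lam. lam {} = 1 \<and> (\<forall>S\<in>D. \<bar>lam S\<bar> \<le> 1 / (\<Prod>p\<in>S. gp p)) \<and>
    (\<Sum>S1\<in>D. \<Sum>S2\<in>D. lam S1 * lam S2 * (\<Prod>p\<in>S1 \<union> S2. gp p)) = 1 / (\<Sum>T\<in>D. \<Prod>p\<in>T. 1 / (1 / gp p - 1))"
proof -
  define g where "g S = (\<Prod>p\<in>S. gp p)" for S
  define H where "H T = (\<Prod>p\<in>T. 1 / (1 / gp p - 1))" for T
  define G where "G = (\<Sum>T\<in>D. H T)"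
  define z where "z T = (-1) ^ card T * H T / G" for T
  define lam where "lam S = (\<Sum>V\<in>{V\<in>D. S \<subseteq> V}. (-1) ^ card (V - S) * z V) / g S" for S
  have H_nonneg: "H T \<ge> 0" if "T \<in> D" for T
    unfolding H_def using gp[OF that] by (intro prod_nonneg) (simp add: field_simps less_imp_le)
  have "H {} \<le> G"
    unfolding G_def by (rule member_le_sum[OF empty]) (use H_nonneg finD in auto)
  then have "G \<ge> 1"
    unfolding H_def by simp
  have g_pos: "g S > 0" if "S \<in> D" for S
    unfolding g_def using gp[OF that] by (intro prod_pos) auto
  have lam_g: "lam S * g S = (\<Sum>V\<in>{V\<in>D. S \<subseteq> V}. (-1) ^ card (V - S) * z V)" if "S \<in> D" for S
    unfolding lam_def using g_pos[OF that] by simp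
  have sum_H_div_G: "(\<Sum>V\<in>D. H V / G) = 1"
    using \<open>G \<ge> 1\<close> by (simp add: G_def sum_divide_distrib[symmetric])
  have "lam {} = (\<Sum>V\<in>D. ((-1) * (-1)) ^ card V * H V / G)"
    unfolding lam_def g_def z_def by (simp add: power_mult_distrib mult.assoc)
  then have "lam {} = 1"
    using sum_H_div_G by simp
  moreover have "\<bar>lam S\<bar> \<le> 1 / g S" if S: "S \<in> D" for S
  proof -
    have "\<bar>lam S * g S\<bar> \<le> (\<Sum>V\<in>{V\<in>D. S \<subseteq> V}. \<bar>(-1) ^ card (V - S) * z V\<bar>)"
      unfolding lam_g[OF S] by (rule sum_abs)
    also have "\<dots> = (\<Sum>V\<in>{V\<in>D. S \<subseteq> V}. H V / G)"
      unfolding z_def using H_nonneg \<open>G \<ge> 1\<close> by (intro sum.cong refl) (auto simp: abs_mult)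
    also have "\<dots> \<le> (\<Sum>V\<in>D. H V / G)"
      by (rule sum_mono2) (use finD H_nonneg \<open>G \<ge> 1\<close> in auto)
    finally show ?thesis
      using g_pos[OF S] sum_H_div_G by (simp add: abs_mult field_simps)
  qed
  moreover have "(\<Sum>S1\<in>D. \<Sum>S2\<in>D. lam S1 * lam S2 * g (S1 \<union> S2)) = 1 / G"
  proof -
    have lam_moebius: "lam S * (\<Prod>p\<in>S. gp p)
        = (\<Sum>V\<in>{V\<in>D. S \<subseteq> V}. (-1) ^ card (V - S) * ((-1) ^ card V * H V / G))" if "S \<in> D" for S
      using lam_g[OF that] unfolding g_def z_def .
    show ?thesis
      unfolding g_def by (rule selberg_form_at_moebius_weights) (fact finD down fin gp H_def G_def lam_moebius)+
  qed
  ultimately show ?thesis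
    unfolding g_def G_def H_def by blast
qed

lemma card_sifted_le_quadratic_form:
  fixes I :: "'b set" and D :: "'a set set" and lam :: "'a set \<Rightarrow> real"
    and sf :: "'a set \<Rightarrow> 'b \<Rightarrow> bool"
  assumes finI: "finite I" and finD: "finite D" and empty: "{} \<in> D" and lam_empty: "lam {} = 1"
    and sf_empty: "\<And>n. sf {} n" and sf_union: "\<And>S1 S2 n. sf (S1 \<union> S2) n \<longleftrightarrow> sf S1 n \<and> sf S2 n"
  shows "real (card {n\<in>I. \<forall>S\<in>D. sf S n \<longrightarrow> S = {}})
         \<le> (\<Sum>S1\<in>D. \<Sum>S2\<in>D. lam S1 * lam S2 * real (card {n\<in>I. sf (S1 \<union> S2) n}))"
proof -
  define w where "w n = (\<Sum>S\<in>D. if sf S n then lam S else 0)" for n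
  have w_sifted: "w n = 1" if "\<forall>S\<in>D. sf S n \<longrightarrow> S = {}" for n
  proof -
    have "w n = (\<Sum>S\<in>D. if S = {} then lam S else 0)"
      unfolding w_def using that sf_empty by (intro sum.cong refl) auto
    then show ?thesis
      using empty finD lam_empty by (simp add: sum.delta)
  qed
  have w_square: "(w n)\<^sup>2 = (\<Sum>S1\<in>D. \<Sum>S2\<in>D. if sf (S1 \<union> S2) n then lam S1 * lam S2 else 0)" for n
    unfolding w_def power2_eq_square sum_product by (intro sum.cong refl) (auto simp: sf_union)
  have "real (card {n\<in>I. \<forall>S\<in>D. sf S n \<longrightarrow> S = {}}) = (\<Sum>n\<in>{n\<in>I. \<forall>S\<in>D. sf S n \<longrightarrow> S = {}}. (w n)\<^sup>2)"
    using w_sifted by simp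
  also have "\<dots> \<le> (\<Sum>n\<in>I. (w n)\<^sup>2)"
    by (rule sum_mono2) (use finI in auto)
  also have "\<dots> = (\<Sum>S1\<in>D. \<Sum>S2\<in>D. \<Sum>n\<in>I. if sf (S1 \<union> S2) n then lam S1 * lam S2 else 0)"
    unfolding w_square by (subst sum.swap) (auto intro: sum.cong sum.swap)
  also have "\<dots> = (\<Sum>S1\<in>D. \<Sum>S2\<in>D. lam S1 * lam S2 * real (card {n\<in>I. sf (S1 \<union> S2) n}))"
    by (simp add: sum.inter_filter[OF finI, symmetric] mult.commute)
  finally show ?thesis .
qed

text \<open>The sets in \<open>D\<close> play the role of the squarefree sieving moduli, \<open>sf S n\<close> is the
  event that \<open>n\<close> is caught by all the sieving conditions indexed by \<open>S\<close>, and
  \<open>\<Prod>p\<in>S. gp p\<close> is its density.\<close>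

theorem selberg_sieve:
  fixes I :: "'b set" and D :: "'a set set" and sf :: "'a set \<Rightarrow> 'b \<Rightarrow> bool" and gp :: "'a \<Rightarrow> real"
  assumes finI: "finite I" and finD: "finite D" and down: "\<And>V S. V \<in> D \<Longrightarrow> S \<subseteq> V \<Longrightarrow> S \<in> D"
    and fin: "\<And>V. V \<in> D \<Longrightarrow> finite V" and empty: "{} \<in> D"
    and gp: "\<And>V p. V \<in> D \<Longrightarrow> p \<in> V \<Longrightarrow> 0 < gp p \<and> gp p < 1"
    and sf_empty: "\<And>n. sf {} n" and sf_union: "\<And>S1 S2 n. sf (S1 \<union> S2) n \<longleftrightarrow> sf S1 n \<and> sf S2 n"
    and remainder: "\<And>S1 S2. S1 \<in> D \<Longrightarrow> S2 \<in> D \<Longrightarrow>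
      \<bar>real (card {n\<in>I. sf (S1 \<union> S2) n}) - y * (\<Prod>p\<in>S1 \<union> S2. gp p)\<bar> \<le> R"
  shows "real (card {n\<in>I. \<forall>S\<in>D. sf S n \<longrightarrow> S = {}})
         \<le> y / (\<Sum>T\<in>D. \<Prod>p\<in>T. 1 / (1 / gp p - 1)) + R * (\<Sum>S\<in>D. 1 / (\<Prod>p\<in>S. gp p))\<^sup>2"
proof -
  define g where "g S = (\<Prod>p\<in>S. gp p)" for S
  define c where "c S = real (card {n\<in>I. sf S n})" for S
  have "\<exists>lam. lam {} = 1 \<and> (\<forall>S\<in>D. \<bar>lam S\<bar> \<le> 1 / g S) \<and>
      (\<Sum>S1\<in>D. \<Sum>S2\<in>D. lam S1 * lam S2 * g (S1 \<union> S2)) = 1 / (\<Sum>T\<in>D. \<Prod>p\<in>T. 1 / (1 / gp p - 1))"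
    unfolding g_def by (rule selberg_optimal_weights) (fact finD down fin empty gp)+
  then obtain lam where lam_empty: "lam {} = 1" and lam_le: "\<forall>S\<in>D. \<bar>lam S\<bar> \<le> 1 / g S"
    and main: "(\<Sum>S1\<in>D. \<Sum>S2\<in>D. lam S1 * lam S2 * g (S1 \<union> S2)) = 1 / (\<Sum>T\<in>D. \<Prod>p\<in>T. 1 / (1 / gp p - 1))"
    by blast
  have "R \<ge> 0"
    using remainder[OF empty empty] by linarith
  have "real (card {n\<in>I. \<forall>S\<in>D. sf S n \<longrightarrow> S = {}}) \<le> (\<Sum>S1\<in>D. \<Sum>S2\<in>D. lam S1 * lam S2 * c (S1 \<union> S2))"
    unfolding c_def
    by (rule card_sifted_le_quadratic_form[of I D lam sf, OF finI finD empty lam_empty sf_empty sf_union])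
  also have "\<dots> = y * (\<Sum>S1\<in>D. \<Sum>S2\<in>D. lam S1 * lam S2 * g (S1 \<union> S2))
                 + (\<Sum>S1\<in>D. \<Sum>S2\<in>D. lam S1 * lam S2 * (c (S1 \<union> S2) - y * g (S1 \<union> S2)))"
    by (simp add: sum_distrib_left sum.distrib[symmetric] algebra_simps)
  also have "(\<Sum>S1\<in>D. \<Sum>S2\<in>D. lam S1 * lam S2 * (c (S1 \<union> S2) - y * g (S1 \<union> S2)))
      \<le> (\<Sum>S1\<in>D. \<Sum>S2\<in>D. \<bar>lam S1\<bar> * \<bar>lam S2\<bar> * R)"
  proof (intro sum_mono)
    fix S1 S2 assume "S1 \<in> D" "S2 \<in> D"
    then have "\<bar>c (S1 \<union> S2) - y * g (S1 \<union> S2)\<bar> \<le> R"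
      unfolding c_def g_def by (rule remainder)
    then have "\<bar>lam S1\<bar> * \<bar>lam S2\<bar> * \<bar>c (S1 \<union> S2) - y * g (S1 \<union> S2)\<bar> \<le> \<bar>lam S1\<bar> * \<bar>lam S2\<bar> * R"
      by (simp add: mult_left_mono)
    then show "lam S1 * lam S2 * (c (S1 \<union> S2) - y * g (S1 \<union> S2)) \<le> \<bar>lam S1\<bar> * \<bar>lam S2\<bar> * R"
      by (metis abs_ge_self abs_mult order_trans)
  qed
  also have "(\<Sum>S1\<in>D. \<Sum>S2\<in>D. \<bar>lam S1\<bar> * \<bar>lam S2\<bar> * R) = R * (\<Sum>S\<in>D. \<bar>lam S\<bar>)\<^sup>2"
    by (simp add: power2_eq_square sum_product sum_distrib_left mult_ac)
  also have "\<dots> \<le> R * (\<Sum>S\<in>D. 1 / g S)\<^sup>2"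
  proof -
    have "(\<Sum>S\<in>D. \<bar>lam S\<bar>) \<le> (\<Sum>S\<in>D. 1 / g S)"
      using lam_le by (intro sum_mono) auto
    then have "(\<Sum>S\<in>D. \<bar>lam S\<bar>)\<^sup>2 \<le> (\<Sum>S\<in>D. 1 / g S)\<^sup>2"
      by (rule power_mono) (simp add: sum_nonneg)
    then show ?thesis
      using \<open>R \<ge> 0\<close> by (rule mult_left_mono)
  qed
  finally show ?thesis
    using main unfolding g_def by simp
qed

section \<open>Integers exactly divisible by a set of primes\<close>

lemma finite_nat_le_real: "finite {n::nat. real n \<le> t}"
proof (rule finite_subset[of _ "{..nat \<lceil>t\<rceil>}"])
  show "{n::nat. real n \<le> t} \<subseteq> {..nat \<lceil>t\<rceil>}"
  proof
    fix m assume "m \<in> {n::nat. real n \<le> t}"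
    then have "real m \<le> t" by simp
    then have "real m \<le> real (nat \<lceil>t\<rceil>)" by linarith
    then show "m \<in> {..nat \<lceil>t\<rceil>}" by simp
  qed
qed simp

lemma prime_factors_prod_primes:
  assumes "finite S" "\<forall>p\<in>S. prime (p::nat)"
  shows "prime_factors (\<Prod>S) = S"
proof -
  have "0 \<notin> (\<lambda>p. p) ` S"
    using assms by auto
  then have "prime_factors (\<Prod>S) = (\<Union>p\<in>S. prime_factors p)"
    using prime_factors_prod[OF assms(1), of "\<lambda>p. p"] by simp
  also have "\<dots> = (\<Union>p\<in>S. {p})"
    using assms by (intro SUP_cong) (simp_all add: prime_prime_factors)
  finally show ?thesis by simp
qed

lemma prime_dvd_prod_primes_iff:
  assumes "finite S" "\<forall>p\<in>S. prime (p::nat)" "prime q"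
  shows "q dvd \<Prod>S \<longleftrightarrow> q \<in> S"
proof -
  have "\<Prod>S > 0"
    using assms by (simp add: prime_gt_0_nat prod_pos)
  then show ?thesis
    using prime_factors_prod_primes[OF assms(1,2)] assms(3) in_prime_factors_iff[of q "\<Prod>S"] by auto
qed

lemma prod_primes_dvd:
  assumes "finite S" "\<forall>p\<in>S. prime (p::nat)" "\<forall>p\<in>S. p dvd n"
  shows "\<Prod>S dvd n"
  using assms
proof (induction S rule: finite_induct)
  case (insert p S)
  then have "\<not> p dvd \<Prod>S"
    using prime_dvd_prod_primes_iff[of S p] by auto
  then have "coprime p (\<Prod>S)"
    using insert.prems by (simp add: prime_imp_coprime)
  then show ?case
    using insert by (simp add: divides_mult)
qed simp

definition exactly_divisible :: "nat set \<Rightarrow> nat \<Rightarrow> bool" where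
  "exactly_divisible S n \<longleftrightarrow> (\<forall>p\<in>S. p dvd n \<and> \<not> p\<^sup>2 dvd n)"

lemma coprime_if_exactly_divisible_prod_mult:
  assumes fin: "finite S" and primes: "\<forall>p\<in>S. prime (p::nat)"
    and exact: "exactly_divisible S (\<Prod>S * m)"
  shows "coprime m (\<Prod>S)"
proof (rule ccontr)
  assume "\<not> coprime m (\<Prod>S)"
  then have "gcd m (\<Prod>S) \<noteq> 1"
    using coprime_iff_gcd_eq_1 by blast
  then obtain q where "prime q" "q dvd gcd m (\<Prod>S)"
    using prime_factor_nat by blast
  then have q: "prime q" "q dvd m" "q dvd \<Prod>S"
    using dvd_trans gcd_dvd1 gcd_dvd2 by blast+
  then have "q \<in> S"
    using prime_dvd_prod_primes_iff[OF fin primes] by blast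
  moreover have "q\<^sup>2 dvd \<Prod>S * m"
    using q by (simp add: power2_eq_square mult_dvd_mono)
  ultimately show False
    using exact unfolding exactly_divisible_def by auto
qed

lemma exactly_divisible_prod_mult_if_coprime:
  assumes fin: "finite S" and primes: "\<forall>p\<in>S. prime (p::nat)" and coprime: "coprime m (\<Prod>S)"
  shows "exactly_divisible S (\<Prod>S * m)"
  unfolding exactly_divisible_def
proof
  fix p assume p: "p \<in> S"
  then have "prime p" and p_dvd: "p dvd \<Prod>S"
    using primes dvd_prodI[OF fin p, of "\<lambda>x. x"] by auto
  have "\<not> p dvd \<Prod>(S - {p})"
    using prime_dvd_prod_primes_iff[of "S - {p}" p] fin primes p by auto
  moreover have "\<not> p dvd m"
  proof
    assume "p dvd m"
    with coprime have "is_unit p"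
      using p_dvd by (rule coprime_common_divisor)
    then show False
      using \<open>prime p\<close> by auto
  qed
  ultimately have "\<not> p * p dvd p * (\<Prod>(S - {p}) * m)"
    using \<open>prime p\<close> by (simp add: prime_dvd_mult_iff)
  moreover have "\<Prod>S = p * \<Prod>(S - {p})"
    using p fin by (simp add: prod.remove)
  ultimately show "p dvd \<Prod>S * m \<and> \<not> p\<^sup>2 dvd \<Prod>S * m"
    using p_dvd by (simp add: power2_eq_square mult.assoc)
qed

lemma exactly_divisible_iff:
  assumes fin: "finite S" and primes: "\<forall>p\<in>S. prime (p::nat)"
  shows "exactly_divisible S n \<longleftrightarrow> \<Prod>S dvd n \<and> coprime (n div \<Prod>S) (\<Prod>S)"
proof (cases "\<Prod>S dvd n")
  case True
  then obtain m where "n = \<Prod>S * m" ..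
  moreover have "\<Prod>S > 0"
    using primes by (simp add: prime_gt_0_nat prod_pos)
  ultimately show ?thesis
    using coprime_if_exactly_divisible_prod_mult[OF fin primes]
      exactly_divisible_prod_mult_if_coprime[OF fin primes] by auto
next
  case False
  then show ?thesis
    using prod_primes_dvd[OF fin primes] unfolding exactly_divisible_def by blast
qed

definition coprime_count :: "nat \<Rightarrow> nat \<Rightarrow> nat" where
  "coprime_count d N = card {m. 1 \<le> m \<and> m \<le> N \<and> coprime m d}"

lemma finite_coprime_upto: "finite {m::nat. 1 \<le> m \<and> m \<le> N \<and> coprime m d}"
  by (rule finite_subset[of _ "{..N}"]) auto

lemma coprime_count_0 [simp]: "coprime_count d 0 = 0"
  unfolding coprime_count_def by simp

lemma coprime_count_Suc:
  "coprime_count d (Suc N) = coprime_count d N + (if coprime (Suc N) d then 1 else 0)"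
proof -
  have "{m. 1 \<le> m \<and> m \<le> Suc N \<and> coprime m d}
      = {m. 1 \<le> m \<and> m \<le> N \<and> coprime m d} \<union> (if coprime (Suc N) d then {Suc N} else {})"
    by (auto simp: le_Suc_eq)
  then show ?thesis
    unfolding coprime_count_def using finite_coprime_upto[of N d] by (auto simp: card_insert_if)
qed

lemma coprime_count_mono: "N \<le> N' \<Longrightarrow> coprime_count d N \<le> coprime_count d N'"
  unfolding coprime_count_def by (rule card_mono[OF finite_coprime_upto]) auto

lemma coprime_count_modulus: "coprime_count d d = totient d"
  unfolding coprime_count_def totient_def totatives_def by (intro arg_cong[where f = card]) auto

lemma coprime_count_mult_add: "coprime_count d (q * d + r) = q * totient d + coprime_count d r"
proof -
  have add_modulus: "coprime_count d (N + d) = coprime_count d N + totient d" for N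
  proof (induction N)
    case (Suc N)
    have "gcd (Suc (N + d)) d = gcd (Suc N) d"
      using gcd_add1[of "Suc N" d] by simp
    then have "coprime (Suc (N + d)) d \<longleftrightarrow> coprime (Suc N) d"
      unfolding coprime_iff_gcd_eq_1 by (rule arg_cong[where f = "\<lambda>z. z = 1"])
    then show ?case
      using Suc by (simp add: coprime_count_Suc)
  qed (simp add: coprime_count_modulus)
  show ?thesis
  proof (induction q)
    case (Suc q)
    have "coprime_count d (Suc q * d + r) = coprime_count d ((q * d + r) + d)"
      by (simp add: algebra_simps)
    then show ?case
      using Suc.IH by (simp add: add_modulus)
  qed simp
qed

lemma coprime_count_approx:
  assumes "d > 0"
  shows "\<bar>real (coprime_count d N) - real N * totient d / d\<bar> \<le> totient d"
proof -
  define q r where "q = N div d" and "r = N mod d"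
  have N: "N = q * d + r" and "r < d"
    unfolding q_def r_def using assms by simp_all
  then have "real (coprime_count d r) \<le> totient d"
    using coprime_count_mono[of r d d] by (simp add: coprime_count_modulus)
  moreover have "real r * totient d / d \<le> totient d"
    using \<open>r < d\<close> by (simp add: divide_le_eq mult_right_mono)
  moreover have "real N * totient d / d = real q * totient d + real r * totient d / d"
    using assms unfolding N by (simp add: field_simps)
  moreover have "real (coprime_count d N) = real q * totient d + real (coprime_count d r)"
    unfolding N coprime_count_mult_add by simp
  moreover have "0 \<le> real r * totient d / d"
    by simp
  ultimately show ?thesis
    unfolding abs_le_iff by (intro conjI) linarith+
qed

lemma coprime_count_floor_approx:
  fixes t :: real
  assumes "d > 0" "t \<ge> 0"
  shows "\<bar>real (coprime_count d (nat \<lfloor>t\<rfloor>)) - t * totient d / d\<bar> \<le> 2 * totient d"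
proof -
  have "\<bar>real (nat \<lfloor>t\<rfloor>) * totient d / d - t * totient d / d\<bar> = \<bar>real (nat \<lfloor>t\<rfloor>) - t\<bar> * totient d / d"
    by (simp add: abs_mult flip: diff_divide_distrib left_diff_distrib)
  also have "\<dots> \<le> totient d / d"
  proof (rule divide_right_mono)
    have "\<bar>real (nat \<lfloor>t\<rfloor>) - t\<bar> \<le> 1"
      using assms(2) by linarith
    then show "\<bar>real (nat \<lfloor>t\<rfloor>) - t\<bar> * totient d \<le> totient d"
      using mult_right_mono[of _ 1 "real (totient d)"] by simp
  qed simp
  also have "\<dots> \<le> totient d"
    using assms(1) by (simp add: divide_le_eq)
  finally show ?thesis
    using coprime_count_approx[OF assms(1), of "nat \<lfloor>t\<rfloor>"] by linarith
qed

lemma coprime_count_floor_add_interval: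
  assumes "0 \<le> a" "a \<le> b"
  shows "coprime_count d (nat \<lfloor>b\<rfloor>)
       = coprime_count d (nat \<lfloor>a\<rfloor>) + card {m. a < real m \<and> real m \<le> b \<and> coprime m d}"
proof -
  have le_floor: "m \<le> nat \<lfloor>t\<rfloor> \<longleftrightarrow> real m \<le> t" if "t \<ge> 0" for m t
    using that by (simp add: le_nat_iff le_floor_iff)
  have split: "{m. 1 \<le> m \<and> m \<le> nat \<lfloor>b\<rfloor> \<and> coprime m d}
      = {m. 1 \<le> m \<and> m \<le> nat \<lfloor>a\<rfloor> \<and> coprime m d} \<union> {m. a < real m \<and> real m \<le> b \<and> coprime m d}"
    using assms by (auto simp: le_floor)
  have "finite {m. a < real m \<and> real m \<le> b \<and> coprime m d}"
    by (rule finite_subset[OF _ finite_nat_le_real[of b]]) auto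
  then show ?thesis
    unfolding coprime_count_def split
    by (rule card_Un_disjoint[OF finite_coprime_upto]) (use assms in \<open>auto simp: le_floor\<close>)
qed

lemma card_exactly_divisible_interval:
  assumes fin: "finite S" and primes: "\<forall>p\<in>S. prime (p::nat)" and "x \<ge> 0" "y \<ge> 0"
  shows "\<bar>real (card {n. x < real n \<and> real n \<le> x + y \<and> exactly_divisible S n})
          - y * totient (\<Prod>S) / (\<Prod>S)\<^sup>2\<bar> \<le> 4 * \<Prod>S"
proof -
  define d where "d = \<Prod>S"
  have "d > 0"
    unfolding d_def using primes by (simp add: prime_gt_0_nat prod_pos)
  have exact_iff: "exactly_divisible S n \<longleftrightarrow> d dvd n \<and> coprime (n div d) d" for n
    unfolding d_def by (rule exactly_divisible_iff[OF fin primes])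
  define a b where "a = x / d" and "b = (x + y) / d"
  have ab: "0 \<le> a" "a \<le> b"
    unfolding a_def b_def using assms \<open>d > 0\<close> by (simp_all add: divide_right_mono)
  have "{n. x < real n \<and> real n \<le> x + y \<and> exactly_divisible S n}
      = (\<lambda>m. d * m) ` {m. a < real m \<and> real m \<le> b \<and> coprime m d}"
  proof (intro equalityI subsetI)
    fix n assume "n \<in> {n. x < real n \<and> real n \<le> x + y \<and> exactly_divisible S n}"
    then obtain m where "n = d * m" "x < real n" "real n \<le> x + y" "coprime m d"
      using exact_iff \<open>d > 0\<close> by fastforce
    then show "n \<in> (\<lambda>m. d * m) ` {m. a < real m \<and> real m \<le> b \<and> coprime m d}"
      using \<open>d > 0\<close> unfolding a_def b_def by (auto simp: field_simps)
  next
    fix n assume "n \<in> (\<lambda>m. d * m) ` {m. a < real m \<and> real m \<le> b \<and> coprime m d}"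
    then obtain m where "n = d * m" "a < real m" "real m \<le> b" "coprime m d"
      by auto
    then show "n \<in> {n. x < real n \<and> real n \<le> x + y \<and> exactly_divisible S n}"
      using exact_iff \<open>d > 0\<close> unfolding a_def b_def by (auto simp: field_simps)
  qed
  moreover have "inj_on (\<lambda>m. d * m) A" for A
    using \<open>d > 0\<close> by (auto intro: inj_onI)
  ultimately have "card {n. x < real n \<and> real n \<le> x + y \<and> exactly_divisible S n}
      = coprime_count d (nat \<lfloor>b\<rfloor>) - coprime_count d (nat \<lfloor>a\<rfloor>)"
    using coprime_count_floor_add_interval[OF ab, of d] by (simp add: card_image)
  moreover have "b * totient d / d - a * totient d / d = y * totient d / d\<^sup>2"
    unfolding a_def b_def by (simp add: add_divide_distrib power2_eq_square distrib_right)
  moreover have "real (totient d) \<le> d"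
    by (simp add: totient_le)
  ultimately show ?thesis
    using coprime_count_floor_approx[OF \<open>d > 0\<close>, of a] coprime_count_floor_approx[OF \<open>d > 0\<close>, of b]
      coprime_count_floor_add_interval[OF ab, of d] ab
    unfolding d_def by (simp add: of_nat_diff)
qed

section \<open>Sieving the \<open>k\<close>-full numbers\<close>

text \<open>\<open>sieve_sets W\<close> encodes the squarefree moduli \<open>d \<le> W\<close> by their sets of prime factors,
  and \<open>exact_density p\<close> is the density of the integers exactly divisible by \<open>p\<close>.\<close>

definition sieve_sets :: "nat \<Rightarrow> nat set set" where
  "sieve_sets W = {T. T \<subseteq> {p. prime p \<and> p \<le> W} \<and> \<Prod>T \<le> W}"

definition exact_density :: "nat \<Rightarrow> real" where
  "exact_density p = real (p - 1) / real p ^ 2"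

definition selberg_mass :: "nat \<Rightarrow> real" where
  "selberg_mass W = (\<Sum>T\<in>sieve_sets W. \<Prod>p\<in>T. 1 / (1 / exact_density p - 1))"

lemma sieve_sets_primes: "T \<in> sieve_sets W \<Longrightarrow> finite T \<and> (\<forall>p\<in>T. prime p)"
  unfolding sieve_sets_def by (auto intro: finite_subset[of _ "{..W}"])

lemma finite_sieve_sets: "finite (sieve_sets W)"
  by (rule finite_subset[of _ "Pow {..W}"]) (auto simp: sieve_sets_def)

lemma prod_le_prod_superset_nat:
  assumes "finite V" "S \<subseteq> V" "0 \<notin> V"
  shows "\<Prod>S \<le> (\<Prod>V :: nat)"
proof (rule dvd_imp_le)
  show "\<Prod>S dvd \<Prod>V"
    using assms by (intro prod_dvd_prod_subset)
  show "\<Prod>V > 0"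
    using assms by (auto intro!: prod_pos simp flip: neq0_conv)
qed

lemma prod_union_le_nat:
  assumes "finite A" "finite B" "0 \<notin> A \<inter> B"
  shows "\<Prod>(A \<union> B) \<le> \<Prod>A * (\<Prod>B :: nat)"
proof -
  have "\<Prod>(A \<union> B) * \<Prod>(A \<inter> B) = \<Prod>A * \<Prod>B"
    by (rule prod.union_inter) (use assms in auto)
  moreover have "\<Prod>(A \<inter> B) > 0"
    using assms by (auto intro!: prod_pos simp flip: neq0_conv)
  then have "\<Prod>(A \<union> B) \<le> \<Prod>(A \<union> B) * \<Prod>(A \<inter> B)"
    by simp
  ultimately show ?thesis
    by simp
qed

lemma sieve_sets_downward_closed:
  assumes "V \<in> sieve_sets W" "S \<subseteq> V"
  shows "S \<in> sieve_sets W"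
proof -
  have "0 \<notin> V"
    using sieve_sets_primes[OF assms(1)] by auto
  then have "\<Prod>S \<le> \<Prod>V"
    using sieve_sets_primes[OF assms(1)] assms(2) by (intro prod_le_prod_superset_nat) auto
  then show ?thesis
    using assms unfolding sieve_sets_def by auto
qed

lemma card_sieve_sets_le: "card (sieve_sets W) \<le> W"
proof -
  have "inj_on (\<lambda>T. \<Prod>T) (sieve_sets W)"
  proof (rule inj_onI)
    fix T1 T2 assume T: "T1 \<in> sieve_sets W" "T2 \<in> sieve_sets W" and "\<Prod>T1 = \<Prod>T2"
    then have "prime_factors (\<Prod>T1) = prime_factors (\<Prod>T2)"
      by simp
    then show "T1 = T2"
      using sieve_sets_primes[OF T(1)] sieve_sets_primes[OF T(2)] by (simp add: prime_factors_prod_primes)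
  qed
  moreover have "(\<lambda>T. \<Prod>T) ` sieve_sets W \<subseteq> {1..W}"
  proof
    fix z assume "z \<in> (\<lambda>T. \<Prod>T) ` sieve_sets W"
    then obtain T where T: "T \<in> sieve_sets W" "z = \<Prod>T"
      by auto
    have "\<Prod>T > 0"
      using sieve_sets_primes[OF T(1)] by (simp add: prime_gt_0_nat prod_pos)
    then show "z \<in> {1..W}"
      using T unfolding sieve_sets_def by auto
  qed
  ultimately show ?thesis
    using card_inj_on_le[of "\<lambda>T. \<Prod>T" "sieve_sets W" "{1..W}"] by simp
qed

lemma exact_density_nonneg: "exact_density p \<ge> 0"
  unfolding exact_density_def by simp

lemma exact_density_bounds:
  assumes "prime p"
  shows "0 < exact_density p \<and> exact_density p < 1"
proof -
  have "p \<ge> 2"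
    using assms by (rule prime_ge_2_nat)
  moreover have "p \<le> p * p"
    by simp
  ultimately have "p - 1 < p * p"
    by linarith
  then have "real (p - 1) < real p ^ 2"
    by (simp only: power2_eq_square of_nat_mult[symmetric] of_nat_less_iff)
  then show ?thesis
    unfolding exact_density_def using \<open>p \<ge> 2\<close> by (simp add: divide_less_eq)
qed

lemma prod_exact_density:
  assumes "finite S" "\<forall>p\<in>S. prime (p::nat)"
  shows "(\<Prod>p\<in>S. exact_density p) = real (totient (\<Prod>S)) / real (\<Prod>S) ^ 2"
proof -
  have "totient (\<Prod>S) = (\<Prod>p\<in>S. totient p)"
  proof (rule totient_prod_coprime)
    show "pairwise coprime ((\<lambda>x. x) ` S)"
      using assms unfolding pairwise_def by (auto simp: primes_coprime)
  qed (use assms in auto)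
  also have "\<dots> = (\<Prod>p\<in>S. p - 1)"
    using assms by (intro prod.cong refl) (simp add: totient_prime)
  finally show ?thesis
    unfolding exact_density_def by (simp add: of_nat_prod prod_dividef prod_power_distrib)
qed

lemma inverse_prod_exact_density_le:
  assumes "finite S" "\<forall>p\<in>S. prime (p::nat)"
  shows "1 / (\<Prod>p\<in>S. exact_density p) \<le> real (\<Prod>S) ^ 2"
proof -
  have "1 / (\<Prod>p\<in>S. exact_density p) = (\<Prod>p\<in>S. real p ^ 2 / real (p - 1))"
    unfolding exact_density_def by (simp add: prod_dividef)
  also have "\<dots> \<le> (\<Prod>p\<in>S. real p ^ 2)"
  proof (rule prod_mono)
    fix p assume "p \<in> S"
    then have "p \<ge> 2"
      using assms by (simp add: prime_ge_2_nat)
    then have "real (p - 1) \<ge> 1"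
      by simp
    then show "0 \<le> real p ^ 2 / real (p - 1) \<and> real p ^ 2 / real (p - 1) \<le> real p ^ 2"
      by (simp add: divide_le_eq mult_le_cancel_left1)
  qed
  finally show ?thesis
    by (simp add: of_nat_prod prod_power_distrib)
qed

lemma k_full_not_exactly_divisible:
  assumes "k \<ge> 2" "k_full k n" "exactly_divisible S n" "\<forall>p\<in>S. prime p"
  shows "S = {}"
proof (rule ccontr)
  assume "S \<noteq> {}"
  then obtain p where "p \<in> S" "prime p"
    using assms(4) by auto
  then have "p dvd n" "\<not> p\<^sup>2 dvd n"
    using assms(3) unfolding exactly_divisible_def by auto
  moreover have "p ^ k dvd n"
    using assms(2) \<open>prime p\<close> \<open>p dvd n\<close> unfolding k_full_def by auto
  moreover have "p\<^sup>2 dvd p ^ k"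
    using assms(1) by (rule le_imp_power_dvd)
  ultimately show False
    using dvd_trans by blast
qed

lemma sieve_remainder_le:
  assumes "S1 \<in> sieve_sets W" "S2 \<in> sieve_sets W" "x \<ge> 0" "y \<ge> 0"
  shows "\<bar>real (card {n. x < real n \<and> real n \<le> x + y \<and> exactly_divisible (S1 \<union> S2) n})
          - y * (\<Prod>p\<in>S1 \<union> S2. exact_density p)\<bar> \<le> 4 * real W ^ 2"
proof -
  have fin: "finite (S1 \<union> S2)" and primes: "\<forall>p\<in>S1 \<union> S2. prime p"
    using sieve_sets_primes[OF assms(1)] sieve_sets_primes[OF assms(2)] by auto
  have "0 \<notin> S1 \<inter> S2"
    using primes not_prime_0 by blast
  then have "\<Prod>(S1 \<union> S2) \<le> \<Prod>S1 * \<Prod>S2"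
    using fin by (intro prod_union_le_nat) auto
  also have "\<dots> \<le> W * W"
    using assms(1,2) unfolding sieve_sets_def by (intro mult_le_mono) auto
  finally have "real (\<Prod>(S1 \<union> S2)) \<le> real (W * W)"
    by (simp only: of_nat_le_iff)
  then have "real (\<Prod>(S1 \<union> S2)) \<le> real W ^ 2"
    by (simp only: of_nat_mult power2_eq_square)
  then show ?thesis
    using card_exactly_divisible_interval[OF fin primes assms(3,4)]
    by (simp add: prod_exact_density[OF fin primes])
qed

lemma sum_inverse_prod_exact_density_le: "(\<Sum>S\<in>sieve_sets W. 1 / (\<Prod>p\<in>S. exact_density p)) \<le> real W ^ 3"
proof -
  have "(\<Sum>S\<in>sieve_sets W. 1 / (\<Prod>p\<in>S. exact_density p)) \<le> (\<Sum>S\<in>sieve_sets W. real W ^ 2)"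
  proof (rule sum_mono)
    fix S assume S: "S \<in> sieve_sets W"
    then have "1 / (\<Prod>p\<in>S. exact_density p) \<le> real (\<Prod>S) ^ 2"
      using sieve_sets_primes[OF S] by (intro inverse_prod_exact_density_le) auto
    also have "\<dots> \<le> real W ^ 2"
    proof (rule power_mono)
      have "\<Prod>S \<le> W"
        using S unfolding sieve_sets_def by auto
      then show "real (\<Prod>S) \<le> real W"
        by (simp only: of_nat_le_iff)
    qed (simp only: of_nat_0_le_iff)
    finally show "1 / (\<Prod>p\<in>S. exact_density p) \<le> real W ^ 2" .
  qed
  also have "\<dots> \<le> real W * real W ^ 2"
    using card_sieve_sets_le[of W] by (simp add: mult_right_mono)
  finally show ?thesis
    by (simp add: power3_eq_cube power2_eq_square)
qed

theorem card_k_full_interval_le_sieve: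
  assumes "k \<ge> 2" "x \<ge> 0" "y \<ge> 0" "W \<ge> 1"
  shows "real (card {n. x < real n \<and> real n \<le> x + y \<and> k_full k n}) \<le> y / selberg_mass W + 4 * real W ^ 8"
proof -
  define I where "I = {n. x < real n \<and> real n \<le> x + y}"
  define D where "D = sieve_sets W"
  have finI: "finite I"
    unfolding I_def by (rule finite_subset[OF _ finite_nat_le_real[of "x + y"]]) auto
  have finD: "finite D"
    unfolding D_def by (rule finite_sieve_sets)
  have down: "\<And>V S. V \<in> D \<Longrightarrow> S \<subseteq> V \<Longrightarrow> S \<in> D"
    unfolding D_def by (rule sieve_sets_downward_closed)
  have fin: "\<And>V. V \<in> D \<Longrightarrow> finite V" and primes: "\<And>V. V \<in> D \<Longrightarrow> \<forall>p\<in>V. prime p"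
    unfolding D_def using sieve_sets_primes by auto
  have empty: "{} \<in> D"
    unfolding D_def sieve_sets_def using assms(4) by simp
  have density: "\<And>V p. V \<in> D \<Longrightarrow> p \<in> V \<Longrightarrow> 0 < exact_density p \<and> exact_density p < 1"
    using primes exact_density_bounds by blast
  have exact_empty: "\<And>n. exactly_divisible {} n"
    by (simp add: exactly_divisible_def)
  have exact_union: "\<And>S1 S2 n. exactly_divisible (S1 \<union> S2) n \<longleftrightarrow> exactly_divisible S1 n \<and> exactly_divisible S2 n"
    by (auto simp: exactly_divisible_def)
  have remainder: "\<And>S1 S2. S1 \<in> D \<Longrightarrow> S2 \<in> D \<Longrightarrow>
      \<bar>real (card {n\<in>I. exactly_divisible (S1 \<union> S2) n}) - y * (\<Prod>p\<in>S1 \<union> S2. exact_density p)\<bar> \<le> 4 * real W ^ 2"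
    unfolding D_def I_def using sieve_remainder_le assms(2,3) by (simp add: conj_assoc)
  have "{n. x < real n \<and> real n \<le> x + y \<and> k_full k n} \<subseteq> {n\<in>I. \<forall>S\<in>D. exactly_divisible S n \<longrightarrow> S = {}}"
    unfolding I_def using k_full_not_exactly_divisible[OF assms(1)] primes by blast
  then have "real (card {n. x < real n \<and> real n \<le> x + y \<and> k_full k n})
      \<le> real (card {n\<in>I. \<forall>S\<in>D. exactly_divisible S n \<longrightarrow> S = {}})"
    using finI by (intro of_nat_mono card_mono) auto
  also have "\<dots> \<le> y / selberg_mass W + 4 * real W ^ 2 * (\<Sum>S\<in>D. 1 / (\<Prod>p\<in>S. exact_density p))\<^sup>2"
    unfolding selberg_mass_def D_def[symmetric]
    by (rule selberg_sieve[of I D exact_density exactly_divisible y "4 * real W ^ 2",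
          OF finI finD down fin empty density exact_empty exact_union remainder])
  also have "\<dots> \<le> y / selberg_mass W + 4 * real W ^ 2 * (real W ^ 3)\<^sup>2"
    unfolding D_def using sum_inverse_prod_exact_density_le[of W]
    by (intro add_left_mono mult_left_mono power_mono sum_nonneg divide_nonneg_nonneg prod_nonneg)
      (simp_all add: exact_density_nonneg)
  also have "4 * real W ^ 2 * (real W ^ 3)\<^sup>2 = 4 * real W ^ 8"
    by (simp add: mult.assoc flip: power_add power_mult)
  finally show ?thesis .
qed

section \<open>A lower bound for the Selberg mass\<close>

lemma sum_inverse_sq_minus_self_plus_one_le: "(\<Sum>n\<in>{2..W}. 1 / (real n ^ 2 - real n + 1)) \<le> 5 / 6"
proof -
  have telescope: "(\<Sum>n\<in>{2..W}. 1 / (real n ^ 2 - real n + 1)) \<le> 5 / 6 - 1 / real W" if "W \<ge> 2" for W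
    using that
  proof (induction W rule: dec_induct)
    case (step W)
    define q where "q = real (Suc W)"
    have "q \<ge> 3"
      using step(1) unfolding q_def by simp
    then have "2 * q \<le> q * q"
      by (intro mult_right_mono) auto
    then have pos: "q\<^sup>2 - q > 0"
      using \<open>q \<ge> 3\<close> unfolding power2_eq_square by linarith
    have "1 / (q\<^sup>2 - q + 1) \<le> 1 / (q\<^sup>2 - q)"
      by (rule divide_left_mono) (use pos in \<open>auto intro!: mult_pos_pos\<close>)
    also have "\<dots> = 1 / real W - 1 / real (Suc W)"
      using step(1) unfolding q_def by (simp add: field_simps power2_eq_square)
    finally have "1 / (real (Suc W) ^ 2 - real (Suc W) + 1) \<le> 1 / real W - 1 / real (Suc W)"
      unfolding q_def .
    then show ?case
      using step by (simp add: atLeastAtMostSuc_conv)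
  qed simp
  show ?thesis
  proof (cases "W \<ge> 2")
    case True
    then show ?thesis
      using telescope[OF True] divide_nonneg_nonneg[of 1 "real W"] by linarith
  qed simp
qed

lemma sum_inverse_squares_le_2: "(\<Sum>s\<in>{1..W}. 1 / real s ^ 2) \<le> 2"
proof -
  have telescope: "(\<Sum>s\<in>{1..W}. 1 / real s ^ 2) \<le> 2 - 1 / real W" if "W \<ge> 1" for W
    using that
  proof (induction W rule: dec_induct)
    case (step W)
    have "1 / real (Suc W) ^ 2 \<le> 1 / (real W * real (Suc W))"
      using step(1) by (intro divide_left_mono) (auto simp: power2_eq_square)
    also have "\<dots> = 1 / real W - 1 / real (Suc W)"
      using step(1) by (simp add: field_simps)
    finally show ?case
      using step by (simp add: atLeastAtMostSuc_conv)
  qed simp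
  show ?thesis
  proof (cases "W \<ge> 1")
    case True
    then show ?thesis
      using telescope[OF True] divide_nonneg_nonneg[of 1 "real W"] by linarith
  qed simp
qed

lemma one_minus_sum_le_prod_one_minus:
  fixes f :: "'a \<Rightarrow> real"
  assumes "finite A" "\<And>i. i \<in> A \<Longrightarrow> 0 \<le> f i \<and> f i \<le> 1"
  shows "1 - (\<Sum>i\<in>A. f i) \<le> (\<Prod>i\<in>A. 1 - f i)"
  using assms
proof (induction A rule: finite_induct)
  case (insert a A)
  have "(\<Prod>i\<in>A. 1 - f i) \<le> 1"
    using insert by (intro prod_le_1) auto
  then have "f a * (\<Prod>i\<in>A. 1 - f i) \<le> f a"
    using insert by (simp add: mult_left_le)
  then show ?case
    using insert by (simp add: algebra_simps)
qed simp

lemma inverse_exact_density_minus_one: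
  assumes "prime p"
  shows "1 / (1 / exact_density p - 1) = (1 - 1 / (real p ^ 2 - real p + 1)) / real p"
proof -
  define A where "A = real p ^ 2 - real p + 1"
  have "real p \<ge> 2"
    using prime_ge_2_nat[OF assms] by simp
  then have "2 * real p \<le> real p * real p"
    by (intro mult_right_mono) auto
  then have "A > 0"
    using \<open>real p \<ge> 2\<close> unfolding A_def power2_eq_square by linarith
  have p1: "real (p - 1) = real p - 1" "real p - 1 \<noteq> 0" "real p \<noteq> 0"
    using \<open>real p \<ge> 2\<close> by (simp_all add: of_nat_diff)
  have "1 / exact_density p - 1 = A / (real p - 1)"
    unfolding exact_density_def A_def p1(1) using p1 by (simp add: field_simps)
  moreover have "(1 - 1 / A) / real p = (real p - 1) / A"
  proof -
    have "A - 1 = real p * (real p - 1)"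
      unfolding A_def by (simp add: power2_eq_square algebra_simps)
    have "(1 - 1 / A) / real p = ((A - 1) / A) / real p"
      using \<open>A > 0\<close> by (simp add: diff_divide_distrib)
    also have "\<dots> = (real p * (real p - 1)) / (A * real p)"
      unfolding \<open>A - 1 = real p * (real p - 1)\<close> by simp
    also have "\<dots> = (real p - 1) / A"
      using p1 \<open>A > 0\<close> by (simp add: field_simps)
    finally show ?thesis .
  qed
  ultimately show ?thesis
    unfolding A_def[symmetric] by simp
qed

lemma prod_sieve_weight_ge:
  assumes T: "T \<in> sieve_sets W"
  shows "1 / (6 * real (\<Prod>T)) \<le> (\<Prod>p\<in>T. 1 / (1 / exact_density p - 1))"
proof -
  have fin: "finite T" and primes: "\<forall>p\<in>T. prime p"
    using sieve_sets_primes[OF T] by auto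
  define a where "a p = 1 / (real p ^ 2 - real p + 1)" for p :: nat
  have a_bounds: "0 \<le> a p \<and> a p \<le> 1" if "p \<ge> 1" for p
  proof -
    define X where "X = real p ^ 2 - real p + 1"
    have "real p * 1 \<le> real p * real p"
      using that by (intro mult_left_mono) auto
    then have "X \<ge> 1"
      unfolding X_def power2_eq_square by linarith
    then show ?thesis
      unfolding a_def X_def[symmetric] by (simp add: divide_le_eq_1)
  qed
  have "T \<subseteq> {2..W}"
    using T primes unfolding sieve_sets_def by (auto simp: prime_ge_2_nat)
  then have "(\<Sum>p\<in>T. a p) \<le> (\<Sum>n\<in>{2..W}. a n)"
    by (intro sum_mono2) (auto simp: a_bounds)
  then have "1 / 6 \<le> 1 - (\<Sum>p\<in>T. a p)"
    using sum_inverse_sq_minus_self_plus_one_le[of W] unfolding a_def by linarith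
  also have "\<dots> \<le> (\<Prod>p\<in>T. 1 - a p)"
    by (rule one_minus_sum_le_prod_one_minus[OF fin]) (use primes a_bounds prime_ge_1_nat in blast)
  finally have "1 / real (\<Prod>T) * (1 / 6) \<le> 1 / real (\<Prod>T) * (\<Prod>p\<in>T. 1 - a p)"
    by (intro mult_left_mono) (simp_all add: prod_nonneg)
  also have "\<dots> = (\<Prod>p\<in>T. 1 / (1 / exact_density p - 1))"
    using primes unfolding a_def
    by (simp add: inverse_exact_density_minus_one prod_dividef of_nat_prod prod.distrib[symmetric])
  finally show ?thesis
    by simp
qed

lemma prod_prime_factors_squarefree_part:
  "\<Prod>(prime_factors (squarefree_part n)) = squarefree_part (n::nat)"
proof -
  define m where "m = squarefree_part n"
  have "m > 0"
    unfolding m_def using squarefree_part_nonzero[of n] by (metis neq0_conv)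
  then have "m = (\<Prod>p\<in>prime_factors m. p ^ multiplicity p m)"
    by (rule prime_factorization_nat)
  also have "\<dots> = (\<Prod>p\<in>prime_factors m. p)"
  proof (rule prod.cong[OF refl])
    fix p assume "p \<in> prime_factors m"
    then have "prime p" "multiplicity p m > 0"
      by (auto simp: prime_factors_multiplicity)
    moreover have "multiplicity p m \<le> Suc 0"
      unfolding m_def using \<open>prime p\<close> by blast
    ultimately have "multiplicity p m = 1"
      by simp
    then show "p ^ multiplicity p m = p"
      by simp
  qed
  finally show ?thesis
    unfolding m_def by simp
qed

lemma squarefree_square_parts_mem:
  assumes n: "n \<in> {1..W}"
  shows "(prime_factors (squarefree_part n), square_part n) \<in> sieve_sets W \<times> {1..W}"
proof -
  have "n > 0"
    using n by simp
  have "squarefree_part n > 0"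
    using squarefree_part_nonzero[of n] by (metis neq0_conv)
  have "squarefree_part n dvd n"
    by (metis dvd_triv_left squarefree_decompose)
  then have "squarefree_part n \<le> W"
    using n \<open>n > 0\<close> by (meson atLeastAtMost_iff dvd_imp_le order_trans)
  have "prime_factors (squarefree_part n) \<subseteq> {p. prime p \<and> p \<le> W}"
  proof
    fix p assume "p \<in> prime_factors (squarefree_part n)"
    then have "prime p" "p dvd squarefree_part n"
      by auto
    then have "p \<le> squarefree_part n"
      using \<open>squarefree_part n > 0\<close> by (simp add: dvd_imp_le)
    then show "p \<in> {p. prime p \<and> p \<le> W}"
      using \<open>prime p\<close> \<open>squarefree_part n \<le> W\<close> by simp
  qed
  moreover have "square_part n \<in> {1..W}"
  proof -
    have "square_part n \<noteq> 0"
      using \<open>n > 0\<close> by simp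
    then have "square_part n \<ge> 1"
      by (metis One_nat_def Suc_leI neq0_conv)
    moreover have "square_part n ^ 2 \<le> n"
      using \<open>n > 0\<close> by (simp add: dvd_imp_le)
    moreover have "square_part n \<le> square_part n ^ 2"
      by (simp add: power2_eq_square)
    ultimately show ?thesis
      using n by simp
  qed
  ultimately show ?thesis
    using \<open>squarefree_part n \<le> W\<close> unfolding sieve_sets_def
    by (simp add: prod_prime_factors_squarefree_part)
qed

text \<open>Every \<open>n \<le> W\<close> is a squarefree number times a square, so the harmonic sum up to \<open>W\<close>
  is at most the sum of \<open>1/d\<close> over squarefree \<open>d \<le> W\<close> times \<open>\<Sum> 1/s\<^sup>2 \<le> 2\<close>.\<close>

lemma sum_sieve_sets_inverse_prod_ge:
  "ln (real W + 1) / 2 \<le> (\<Sum>T\<in>sieve_sets W. 1 / real (\<Prod>T))"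
proof -
  define decompose where "decompose n = (prime_factors (squarefree_part n), square_part n)" for n :: nat
  define f where "f z = 1 / (real (\<Prod>(fst z)) * real (snd z) ^ 2)" for z :: "nat set \<times> nat"
  have n_eq: "n = \<Prod>(fst (decompose n)) * snd (decompose n) ^ 2" for n
    unfolding decompose_def using squarefree_decompose[of n]
    by (simp add: prod_prime_factors_squarefree_part)
  have "inj_on decompose {1..W}"
  proof (rule inj_onI)
    fix n1 n2 assume "decompose n1 = decompose n2"
    then show "n1 = n2"
      using n_eq[of n1] n_eq[of n2] by simp
  qed
  have "ln (real W + 1) \<le> (\<Sum>n\<in>{1..W}. 1 / real n)"
    using ln_le_harm[of W] unfolding harm_def by (simp add: divide_inverse)
  also have "\<dots> = (\<Sum>n\<in>{1..W}. f (decompose n))"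
  proof (rule sum.cong[OF refl])
    fix n
    have "real n = real (\<Prod>(fst (decompose n)) * snd (decompose n) ^ 2)"
      using n_eq[of n] by (rule arg_cong)
    then show "1 / real n = f (decompose n)"
      unfolding f_def by simp
  qed
  also have "\<dots> = (\<Sum>z\<in>decompose ` {1..W}. f z)"
    using sum.reindex[OF \<open>inj_on decompose {1..W}\<close>, of f] by simp
  also have "\<dots> \<le> (\<Sum>z\<in>sieve_sets W \<times> {1..W}. f z)"
  proof (rule sum_mono2)
    show "finite (sieve_sets W \<times> {1..W})"
      by (simp add: finite_sieve_sets)
    show "decompose ` {1..W} \<subseteq> sieve_sets W \<times> {1..W}"
      unfolding decompose_def using squarefree_square_parts_mem by blast
    show "0 \<le> f z" for z
      unfolding f_def by (simp add: prod_nonneg)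
  qed
  also have "\<dots> = (\<Sum>T\<in>sieve_sets W. \<Sum>s\<in>{1..W}. f (T, s))"
    by (simp add: sum.cartesian_product case_prod_unfold)
  also have "\<dots> = (\<Sum>T\<in>sieve_sets W. 1 / real (\<Prod>T)) * (\<Sum>s\<in>{1..W}. 1 / real s ^ 2)"
    unfolding sum_product f_def by (intro sum.cong refl) simp
  also have "\<dots> \<le> (\<Sum>T\<in>sieve_sets W. 1 / real (\<Prod>T)) * 2"
    by (intro mult_left_mono sum_inverse_squares_le_2 sum_nonneg) (simp add: prod_nonneg)
  finally show ?thesis
    by simp
qed

lemma selberg_mass_ge:
  "ln (real W + 1) / 12 \<le> selberg_mass W"
proof -
  have "(\<Sum>T\<in>sieve_sets W. 1 / (6 * real (\<Prod>T))) = (\<Sum>T\<in>sieve_sets W. 1 / real (\<Prod>T)) / 6"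
    unfolding sum_divide_distrib by (intro sum.cong refl) simp
  then have "ln (real W + 1) / 12 \<le> (\<Sum>T\<in>sieve_sets W. 1 / (6 * real (\<Prod>T)))"
    using sum_sieve_sets_inverse_prod_ge[of W] by linarith
  also have "\<dots> \<le> selberg_mass W"
    unfolding selberg_mass_def by (intro sum_mono prod_sieve_weight_ge)
  finally show ?thesis .
qed

section \<open>Choice of the sieve level\<close>

lemma ln_add_one_le_twice_ln:
  fixes y :: real
  assumes "y \<ge> 3"
  shows "ln (y + 1) \<le> 2 * ln y"
proof -
  have "3 * y \<le> y * y"
    using assms by (intro mult_right_mono) auto
  then have "y + 1 \<le> y * y"
    using assms by linarith
  then have "ln (y + 1) \<le> ln (y * y)"
    using assms by simp
  then show ?thesis
    using assms by (simp add: ln_mult)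
qed

lemma sieve_level_bound:
  fixes u y :: real
  assumes "u \<ge> 1" "y = u ^ 10" "ln u > 0" "ln (y + 1) \<le> 20 * ln u"
  shows "12 * y / ln (real (nat \<lfloor>u\<rfloor>) + 1) + 4 * real (nat \<lfloor>u\<rfloor>) ^ 8 \<le> 320 * (y / ln (y + 1))"
proof -
  define W where "W = nat \<lfloor>u\<rfloor>"
  have "W \<ge> 1" "real W \<le> u" "u < real W + 1"
    unfolding W_def using assms(1) by linarith+
  have "y \<ge> 1"
    unfolding assms(2) using assms(1) by (rule one_le_power)
  then have "y > 0" "ln (y + 1) > 0"
    by simp_all
  have "12 * y / ln (real W + 1) \<le> 12 * y / ln u"
    using assms \<open>y > 0\<close> \<open>W \<ge> 1\<close> \<open>u < real W + 1\<close> by (intro divide_left_mono mult_pos_pos) auto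
  also have "\<dots> \<le> 12 * y / (ln (y + 1) / 20)"
    using assms \<open>y > 0\<close> \<open>ln (y + 1) > 0\<close> by (intro divide_left_mono mult_pos_pos) auto
  finally have term1: "12 * y / ln (real W + 1) \<le> 240 * (y / ln (y + 1))"
    by simp
  have "u ^ 8 * ln (y + 1) \<le> u ^ 8 * (20 * u)"
    using assms ln_le_minus_one[of u] by (intro mult_left_mono) auto
  also have "\<dots> = 20 * u ^ 9"
    by (simp add: eval_nat_numeral)
  also have "\<dots> \<le> 20 * u ^ 10"
    using assms(1) by (intro mult_left_mono power_increasing) auto
  finally have "u ^ 8 \<le> 20 * (y / ln (y + 1))"
    using \<open>ln (y + 1) > 0\<close> assms(2) by (simp add: field_simps)
  moreover have "real W ^ 8 \<le> u ^ 8"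
    using \<open>real W \<le> u\<close> by (intro power_mono) auto
  ultimately show ?thesis
    using term1 unfolding W_def by linarith
qed

text \<open>The level \<open>W \<approx> y\<^bsup>1/10\<^esup>\<close> keeps the error term \<open>W\<^sup>8\<close> of the sieve below \<open>y / log y\<close>.\<close>

lemma sieve_level_choice:
  fixes y :: real
  assumes "y \<ge> 3"
  obtains W :: nat where "W \<ge> 1" and "12 * y / ln (real W + 1) + 4 * real W ^ 8 \<le> 320 * (y / ln (y + 1))"
proof -
  define u where "u = y powr (1/10)"
  have "u \<ge> 1"
    unfolding u_def using assms by (intro ge_one_powr_ge_zero) auto
  have y_eq: "y = u ^ 10"
  proof -
    have "u ^ 10 = u powr (real 10)"
      using \<open>u \<ge> 1\<close> by (simp add: powr_realpow)
    also have "\<dots> = y powr (1/10 * 10)"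
      unfolding u_def using assms by (simp add: powr_powr)
    finally show ?thesis
      using assms by simp
  qed
  have "ln y = 10 * ln u"
    using y_eq \<open>u \<ge> 1\<close> by (simp add: ln_realpow)
  moreover have "ln y > 0"
    using assms by simp
  ultimately have "ln u > 0" "ln (y + 1) \<le> 20 * ln u"
    using ln_add_one_le_twice_ln[OF assms] by simp_all
  moreover have "nat \<lfloor>u\<rfloor> \<ge> 1"
    using \<open>u \<ge> 1\<close> by linarith
  ultimately show thesis
    using that sieve_level_bound[OF \<open>u \<ge> 1\<close> y_eq] by blast
qed

lemma card_nat_interval_le:
  assumes "x \<ge> 0" "y \<ge> 0"
  shows "real (card {n. x < real n \<and> real n \<le> x + y}) \<le> y + 4"
  using card_exactly_divisible_interval[of "{}" x y] assms by (simp add: exactly_divisible_def)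

lemma y_over_selberg_mass_le:
  assumes "W \<ge> 1" "y \<ge> 0"
  shows "y / selberg_mass W \<le> 12 * y / ln (real W + 1)"
proof -
  have "ln (real W + 1) / 12 > 0"
    using assms(1) by simp
  moreover have "selberg_mass W \<ge> ln (real W + 1) / 12"
    by (rule selberg_mass_ge)
  moreover have "selberg_mass W > 0"
    using calculation by linarith
  ultimately have "y / selberg_mass W \<le> y / (ln (real W + 1) / 12)"
    using assms(2) by (intro divide_left_mono mult_pos_pos) auto
  then show ?thesis
    by (simp add: mult.commute)
qed

lemma add_4_le_400_mult_div_ln:
  fixes y :: real
  assumes "1 \<le> y" "y < 3"
  shows "y + 4 \<le> 400 * (y / ln (y + 1))"
proof -
  have "ln (y + 1) > 0" "ln (y + 1) \<le> 80"
    using assms ln_le_minus_one[of "y + 1"] by simp_all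
  then have "5 * y * ln (y + 1) \<le> 5 * y * 80"
    using assms by (intro mult_left_mono) auto
  then have "5 * y \<le> 400 * (y / ln (y + 1))"
    using \<open>ln (y + 1) > 0\<close> by (simp add: field_simps)
  then show ?thesis
    using assms by linarith
qed

lemma card_k_full_interval_le:
  assumes "k \<ge> 2" "x \<ge> 0" "y \<ge> 1"
  shows "real (card {n. x < real n \<and> real n \<le> x + y \<and> k_full k n}) \<le> 400 * (y / ln (y + 1))"
proof (cases "y < 3")
  case True
  have "card {n. x < real n \<and> real n \<le> x + y \<and> k_full k n} \<le> card {n. x < real n \<and> real n \<le> x + y}"
    by (rule card_mono[OF finite_subset[OF _ finite_nat_le_real[of "x + y"]]]) auto
  then have "real (card {n. x < real n \<and> real n \<le> x + y \<and> k_full k n}) \<le> y + 4"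
    using card_nat_interval_le[of x y] assms by linarith
  also have "\<dots> \<le> 400 * (y / ln (y + 1))"
    using assms(3) True by (rule add_4_le_400_mult_div_ln)
  finally show ?thesis .
next
  case False
  then have "y \<ge> 3"
    by simp
  then obtain W :: nat where "W \<ge> 1"
    and level: "12 * y / ln (real W + 1) + 4 * real W ^ 8 \<le> 320 * (y / ln (y + 1))"
    by (rule sieve_level_choice)
  have "real (card {n. x < real n \<and> real n \<le> x + y \<and> k_full k n}) \<le> y / selberg_mass W + 4 * real W ^ 8"
    using assms \<open>W \<ge> 1\<close> by (intro card_k_full_interval_le_sieve) auto
  also have "\<dots> \<le> 320 * (y / ln (y + 1))"
    using y_over_selberg_mass_le[OF \<open>W \<ge> 1\<close>, of y] assms level by linarith
  also have "\<dots> \<le> 400 * (y / ln (y + 1))"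
    using assms by (intro mult_right_mono divide_nonneg_nonneg) auto
  finally show ?thesis .
qed

lemma Q_add_diff:
  assumes "x \<ge> 0" "y \<ge> 0"
  shows "real (Q k (x + y)) - real (Q k x) = real (card {n. x < real n \<and> real n \<le> x + y \<and> k_full k n})"
proof -
  define A where "A = {n::nat. n \<ge> 1 \<and> real n \<le> x \<and> k_full k n}"
  define B where "B = {n::nat. x < real n \<and> real n \<le> x + y \<and> k_full k n}"
  have "{n::nat. n \<ge> 1 \<and> real n \<le> x + y \<and> k_full k n} = A \<union> B"
    unfolding A_def B_def using assms by (auto simp: k_full_def)
  moreover have "finite A"
    unfolding A_def by (rule finite_subset[OF _ finite_nat_le_real[of x]]) auto
  moreover have "finite B"
    unfolding B_def by (rule finite_subset[OF _ finite_nat_le_real[of "x + y"]]) auto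
  moreover have "A \<inter> B = {}"
    unfolding A_def B_def by auto
  ultimately have "Q k (x + y) = card A + card B"
    unfolding Q_def by (simp add: card_Un_disjoint)
  moreover have "Q k x = card A"
    unfolding Q_def A_def ..
  ultimately show ?thesis
    unfolding B_def by simp
qed

theorem theorem1:
  fixes k :: nat
  assumes "k \<ge> 2"
  shows "\<exists>C>0. \<forall>x y::real. 1 \<le> x \<longrightarrow> 1 \<le> y \<longrightarrow> y \<le> x \<longrightarrow>
           real (Q k (x + y)) - real (Q k x) \<le> C * (y / ln (y + 1))"
proof (intro exI[of _ 400] conjI allI impI)
  fix x y :: real
  assume "1 \<le> x" "1 \<le> y" "y \<le> x"
  then show "real (Q k (x + y)) - real (Q k x) \<le> 400 * (y / ln (y + 1))"
    using Q_add_diff card_k_full_interval_le[OF assms] by simp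
qed simp

end
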